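(* Let $n\ge1$. If $K$ is an $\mathcal{N}$-set in $\mathbb{R}^n$, then $A=(K-K)\cap\mathbb{Z}^n$ is a finite set of lattice points which generates the additive group $\mathbb{Z}^n$.
   Context: $K-K=\{x-y : x,y\in K\}$. An $\mathcal{N}$-set in $\mathbb{R}^n$ is a compact set $K\subseteq\mathbb{R}^n$ such that for every $x\in\mathbb{R}^n$ there exists $y\in K$ with $x-y\in\mathbb{Z}^n$. *)

theory Defs
  imports "HOL-Analysis.Analysis"
begin

definition lattice_pts :: "(real ^ 'n) set" where
  "lattice_pts = {x. \<forall>i. x $ i \<in> \<int>}"

text \<open>An N-set: compact set meeting every coset x + Z^n.\<close>
definition N_set :: "(real ^ 'n) set \<Rightarrow> bool" where
  "N_set K \<longleftrightarrow> compact K \<and> (\<forall>x. \<exists>y\<in>K. x - y \<in> lattice_pts)"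

definition diff_set :: "('a::ab_group_add) set \<Rightarrow> 'a set" where
  "diff_set K = {x - y | x y. x \<in> K \<and> y \<in> K}"

definition add_subgroup :: "('a::ab_group_add) set \<Rightarrow> bool" where
  "add_subgroup H \<longleftrightarrow> 0 \<in> H \<and> (\<forall>x\<in>H. \<forall>y\<in>H. x + y \<in> H) \<and> (\<forall>x\<in>H. - x \<in> H)"

definition gen_add_subgroup :: "('a::ab_group_add) set \<Rightarrow> 'a set" where
  "gen_add_subgroup A = \<Inter>{H. add_subgroup H \<and> A \<subseteq> H}"

end

theory Submission
  imports Defs
begin

(*
  Finiteness: K - K is compact, hence bounded, and a bounded set contains
  only finitely many lattice points.

  Generation: A \<subseteq> Z^n gives <A> \<subseteq> Z^n.  Conversely let H be any additive
  subgroup containing A, and m \<in> Z^n.  Whenever y1, y2 \<in> K lie in the same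
  coset x + Z^n, their difference lies in A \<subseteq> H, so the class of x - y
  modulo H does not depend on the choice of y.  Sweep x = t*m along
  t \<in> [0,1]: the times at which the class is that of 0, resp. a different
  one, form two closed sets (compactness of K, discreteness of Z^n) which
  cover [0,1] (K is an N-set) and are disjoint.  By connectedness the class
  at t = 1 equals the class at t = 0, which yields m \<in> H.
*)

lemma add_subgroup_diff:
  assumes "add_subgroup H" "a \<in> H" "b \<in> H"
  shows "a - b \<in> H"
  using assms unfolding add_subgroup_def by (metis diff_conv_add_uminus)

lemma gen_add_subgroup_least:
  assumes "add_subgroup H" "A \<subseteq> H"
  shows "gen_add_subgroup A \<subseteq> H"
  using assms unfolding gen_add_subgroup_def by blast

lemma subset_gen_add_subgroup:
  assumes "\<And>H. add_subgroup H \<Longrightarrow> A \<subseteq> H \<Longrightarrow> S \<subseteq> H"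
  shows "S \<subseteq> gen_add_subgroup A"
  using assms unfolding gen_add_subgroup_def by blast

lemma add_subgroup_lattice_pts: "add_subgroup (lattice_pts :: (real ^ 'n) set)"
  unfolding add_subgroup_def lattice_pts_def by auto

lemma lattice_pts_diff:
  fixes a b :: "real ^ 'n"
  shows "a \<in> lattice_pts \<Longrightarrow> b \<in> lattice_pts \<Longrightarrow> a - b \<in> lattice_pts"
  by (rule add_subgroup_diff[OF add_subgroup_lattice_pts])

text \<open>Distinct lattice points are at distance at least 1, so every set of
  lattice points is closed.\<close>

lemma closed_lattice_subset:
  fixes S :: "(real ^ 'n) set"
  assumes "S \<subseteq> lattice_pts"
  shows "closed S"
proof (rule discrete_imp_closed[of 1])
  show "\<forall>x\<in>S. \<forall>y\<in>S. dist y x < 1 \<longrightarrow> y = x"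
  proof (intro ballI impI)
    fix x y assume xy: "x \<in> S" "y \<in> S" "dist y x < 1"
    show "y = x"
    proof (subst vec_eq_iff, rule allI)
      fix i
      have "\<bar>(y - x) $ i\<bar> \<le> norm (y - x)" by (rule component_le_norm_cart)
      also have "\<dots> < 1" using xy(3) by (simp add: dist_norm)
      finally have small: "\<bar>y $ i - x $ i\<bar> < 1" by simp
      have "y $ i \<in> \<int>" "x $ i \<in> \<int>"
        using xy assms unfolding lattice_pts_def by auto
      then have "y $ i - x $ i \<in> \<int>" by simp
      with small have "y $ i - x $ i = 0" using Ints_nonzero_abs_less1 by blast
      then show "y $ i = x $ i" by simp
    qed
  qed
qed simp

text \<open>A bounded set contains finitely many lattice points: the coordinate
  vectors of these points range over a finite box of integers.\<close>

lemma finite_bounded_lattice_pts: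
  fixes S :: "(real ^ 'n) set"
  assumes "bounded S"
  shows "finite (S \<inter> lattice_pts)"
proof -
  obtain B where B: "\<forall>x\<in>S. norm x \<le> B" using assms bounded_iff by blast
  define N where "N = \<lceil>B\<rceil>"
  define coords where "coords = (\<lambda>x::real ^ 'n. \<lambda>i. \<lfloor>x $ i\<rfloor>)"
  have "inj_on coords (S \<inter> lattice_pts)"
  proof (rule inj_onI)
    fix x y assume "x \<in> S \<inter> lattice_pts" "y \<in> S \<inter> lattice_pts" "coords x = coords y"
    then have "\<forall>i. x $ i = y $ i"
      unfolding lattice_pts_def coords_def
      by (metis (mono_tags, lifting) IntD2 Ints_cases floor_of_int mem_Collect_eq)
    then show "x = y" by (simp add: vec_eq_iff)
  qed
  moreover have "coords ` (S \<inter> lattice_pts) \<subseteq> {f. \<forall>i. f i \<in> {-N..N}}"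
  proof clarsimp
    fix x i assume "x \<in> S"
    then have "\<bar>x $ i\<bar> \<le> B" using B component_le_norm_cart order_trans by blast
    then show "- N \<le> coords x i \<and> coords x i \<le> N" unfolding coords_def N_def
      by (smt (verit, ccfv_SIG) ceiling_correct floor_le_ceiling floor_mono le_floor_iff of_int_minus)
  qed
  moreover have "finite {f::'n \<Rightarrow> int. \<forall>i. f i \<in> {-N..N}}"
    using finite_set_of_finite_funs[of "UNIV :: 'n set" "{-N..N}" 0] by simp
  ultimately show ?thesis by (metis finite_imageD finite_subset)
qed

lemma closed_sweep_times:
  fixes K P :: "'a::real_normed_vector set"
  assumes "compact K" "closed P"
  shows "closed {t \<in> {0..1::real}. \<exists>y\<in>K. t *\<^sub>R m - y \<in> P}"
proof -
  define f where "f = (\<lambda>p::real \<times> 'a. fst p *\<^sub>R m - snd p)"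
  have "continuous_on UNIV f" unfolding f_def by (intro continuous_intros)
  then have "closed (f -` P)" using assms(2) by (simp add: closed_vimage)
  then have "compact (({0..1} \<times> K) \<inter> f -` P)"
    using assms(1) by (intro compact_Int_closed compact_Times) auto
  then have "compact (fst ` (({0..1} \<times> K) \<inter> f -` P))"
    by (intro compact_continuous_image continuous_on_fst continuous_on_id)
  moreover have "fst ` (({0..1} \<times> K) \<inter> f -` P) = {t \<in> {0..1}. \<exists>y\<in>K. t *\<^sub>R m - y \<in> P}"
    unfolding f_def by force
  ultimately show ?thesis by (metis compact_imp_closed)
qed

lemma connected_closed_cover_stays:
  assumes "closed S1" "closed S2" "U \<subseteq> S1 \<union> S2" "S1 \<inter> S2 = {}" "a \<in> S1"
    and "connected U" "a \<in> U" "b \<in> U"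
  shows "b \<in> S1"
  using assms connected_closed[of U] by blast

text \<open>Two points of K in the same lattice coset of x differ by an element of
  (K - K) \<inter> Z^n; so modulo a subgroup H containing these differences,
  the class of x - y does not depend on the choice of y.\<close>

lemma class_independent_of_representative:
  fixes K H :: "(real ^ 'n) set"
  assumes H: "add_subgroup H" "diff_set K \<inter> lattice_pts \<subseteq> H"
    and y: "y1 \<in> K" "y2 \<in> K" "x - y1 \<in> lattice_pts" "x - y2 \<in> lattice_pts"
  shows "x - y1 + c \<in> H \<longleftrightarrow> x - y2 + c \<in> H"
proof -
  have "y1 - y2 = (x - y2) - (x - y1)" by simp
  then have "y1 - y2 \<in> lattice_pts" using y lattice_pts_diff by metis
  moreover have "y1 - y2 \<in> diff_set K" using y unfolding diff_set_def by blast
  ultimately have d: "y1 - y2 \<in> H" using H(2) by blast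
  have "x - y2 + c = (x - y1 + c) - (- (y1 - y2))" "x - y1 + c = (x - y2 + c) - (y1 - y2)"
    by simp_all
  moreover have "- (y1 - y2) \<in> H" using d H(1) unfolding add_subgroup_def by blast
  ultimately show ?thesis using d H(1) add_subgroup_diff by metis
qed

text \<open>The core of the theorem: every subgroup containing (K - K) \<inter> Z^n
  contains all of Z^n.  The class of t*m - y modulo H is swept from t = 0
  to t = 1.\<close>

lemma lattice_pts_in_subgroup:
  fixes K H :: "(real ^ 'n) set"
  assumes K: "N_set K" and H: "add_subgroup H" "diff_set K \<inter> lattice_pts \<subseteq> H"
    and m: "m \<in> lattice_pts"
  shows "m \<in> H"
proof -
  have cK: "compact K" and cover: "\<And>x. \<exists>y\<in>K. x - y \<in> lattice_pts"
    using K unfolding N_set_def by auto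
  obtain y0 where y0: "y0 \<in> K" "0 - y0 \<in> lattice_pts" using cover by blast
  define P1 where "P1 = {h \<in> lattice_pts. h + y0 \<in> H}"
  define P2 where "P2 = {h \<in> lattice_pts. h + y0 \<notin> H}"
  define S1 where "S1 = {t \<in> {0..1::real}. \<exists>y\<in>K. t *\<^sub>R m - y \<in> P1}"
  define S2 where "S2 = {t \<in> {0..1::real}. \<exists>y\<in>K. t *\<^sub>R m - y \<in> P2}"
  have "P1 \<subseteq> lattice_pts" "P2 \<subseteq> lattice_pts" unfolding P1_def P2_def by auto
  then have "closed S1" "closed S2"
    unfolding S1_def S2_def by (simp_all only: closed_sweep_times cK closed_lattice_subset)
  moreover have "{0..1} \<subseteq> S1 \<union> S2"
  proof
    fix t :: real assume t: "t \<in> {0..1}"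
    obtain y where "y \<in> K" "t *\<^sub>R m - y \<in> lattice_pts" using cover by blast
    moreover from this have "t *\<^sub>R m - y \<in> P1 \<or> t *\<^sub>R m - y \<in> P2"
      unfolding P1_def P2_def by blast
    ultimately show "t \<in> S1 \<union> S2" using t unfolding S1_def S2_def by blast
  qed
  moreover have "S1 \<inter> S2 = {}"
  proof (rule ccontr)
    assume "S1 \<inter> S2 \<noteq> {}"
    then obtain t y1 y2 where y12: "y1 \<in> K" "y2 \<in> K" "t *\<^sub>R m - y1 \<in> P1" "t *\<^sub>R m - y2 \<in> P2"
      unfolding S1_def S2_def by blast
    then have "t *\<^sub>R m - y1 \<in> lattice_pts" "t *\<^sub>R m - y2 \<in> lattice_pts"
      "t *\<^sub>R m - y1 + y0 \<in> H" "t *\<^sub>R m - y2 + y0 \<notin> H"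
      unfolding P1_def P2_def by auto
    then show False
      using class_independent_of_representative[OF H y12(1,2)] by blast
  qed
  moreover have "0 \<in> S1"
  proof -
    have "0 - y0 + y0 \<in> H" using H(1) unfolding add_subgroup_def by simp
    then have "0 *\<^sub>R m - y0 \<in> P1" using y0(2) unfolding P1_def by simp
    then show ?thesis using y0(1) unfolding S1_def by auto
  qed
  ultimately have "1 \<in> S1"
    by (rule connected_closed_cover_stays[where U = "{0..1::real}"]) simp_all
  then obtain y where y: "y \<in> K" "m - y \<in> lattice_pts" "m - y + y0 \<in> H"
    unfolding S1_def P1_def by auto
  have "m - y0 \<in> lattice_pts" using m y0(2) unfolding lattice_pts_def by auto
  then have "m - y0 + y0 \<in> H"
    using class_independent_of_representative[OF H y(1) y0(1) y(2)] y(3) by blast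
  then show ?thesis by simp
qed

theorem mainTheorem8:
  fixes K :: "(real ^ 'n) set"
  assumes "N_set K"
  shows "finite (diff_set K \<inter> lattice_pts)
       \<and> gen_add_subgroup (diff_set K \<inter> lattice_pts) = lattice_pts"
proof
  have "compact (diff_set K)"
    using assms compact_differences unfolding N_set_def diff_set_def by blast
  then show "finite (diff_set K \<inter> lattice_pts)"
    by (intro finite_bounded_lattice_pts compact_imp_bounded)
next
  have "gen_add_subgroup (diff_set K \<inter> lattice_pts) \<subseteq> lattice_pts"
    by (intro gen_add_subgroup_least add_subgroup_lattice_pts) blast
  moreover have "lattice_pts \<subseteq> gen_add_subgroup (diff_set K \<inter> lattice_pts)"
    using lattice_pts_in_subgroup[OF assms] by (intro subset_gen_add_subgroup) blast
  ultimately show "gen_add_subgroup (diff_set K \<inter> lattice_pts) = lattice_pts" by blast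
qed

end
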